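(* There is a function $\varepsilon(n)=o(n)$ such that for all sufficiently large $n$ and all integers $k$ with $\sqrt n\le k\le n$, $$d(k,n)\le 2k\sqrt n-n+\varepsilon(n).$$
   Context: $[n]=\{1,\dots,n\}$; for $A\subset\mathbb Z$, $A-A=\{a-b:a,b\in A\}$. Define $d(k,n)=\max\{|A-A|: A\subseteq[n],\ |A|=k\}$. *)

theory Defs
  imports Complex_Main "HOL-Library.Landau_Symbols"
begin

definition diffset :: "int set \<Rightarrow> int set" where
  "diffset A = {a - b | a b. a \<in> A \<and> b \<in> A}"

definition dkn :: "nat \<Rightarrow> nat \<Rightarrow> nat" where
  "dkn k n = Max {card (diffset A) | A. A \<subseteq> {1..int n} \<and> card A = k}"

end

theory Submission
  imports Defs "HOL-Real_Asymp.Real_Asymp"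
begin

text \<open>
  Write A = {a_0 < ... < a_(k-1)}, fix K \<le> k and split the pairs i < j at the index gap
  m = k - K. The differences a_j - a_i with j - i \<le> m are distinct positive integers whose
  total is at most (n - 1) m (m + 1) / 2, because for a fixed gap d the sum of the a_(i+d) - a_i
  is the sum of the d largest minus the d smallest elements; so there are at most (m + 1) \<surd>n
  of them. Only K (K - 1) / 2 pairs have a larger gap. As A - A consists of 0 and the positive
  differences with their negatives, |A - A| \<le> 2 (m + 1) \<surd>n + K (K - 1) + 1, and the choice
  K = \<lceil>\<surd>n\<rceil> turns this into 2 k \<surd>n - n + O(\<surd>n).
\<close>

lemma diffset_eq_image: "diffset A = (\<lambda>(a, b). a - b) ` (A \<times> A)"
  by (auto simp: diffset_def)

lemma finite_diffset: "finite A \<Longrightarrow> finite (diffset A)"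
  by (simp add: diffset_eq_image)

lemma uminus_mem_diffset: "d \<in> diffset A \<Longrightarrow> - d \<in> diffset A"
  by (force simp: diffset_def)

lemma card_diffset_le_positive:
  assumes "finite A"
  shows "card (diffset A) \<le> 2 * card {d \<in> diffset A. 0 < d} + 1"
proof -
  let ?P = "{d \<in> diffset A. 0 < d}"
  have finP: "finite ?P"
    using finite_diffset[OF assms] by simp
  have "diffset A \<subseteq> ?P \<union> uminus ` ?P \<union> {0}"
  proof
    fix d assume "d \<in> diffset A"
    with uminus_mem_diffset[of d A] show "d \<in> ?P \<union> uminus ` ?P \<union> {0}"
      by (cases "0 < d"; cases "d = 0") (auto intro!: image_eqI[of d uminus "- d"])
  qed
  then have "card (diffset A) \<le> card (?P \<union> uminus ` ?P \<union> {0})"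
    using finP by (intro card_mono) auto
  also have "\<dots> \<le> card ?P + card (uminus ` ?P) + 1"
    using card_Un_le[of "?P \<union> uminus ` ?P" "{0}"] card_Un_le[of ?P "uminus ` ?P"] by simp
  also have "\<dots> \<le> 2 * card ?P + 1"
    using card_image_le[OF finP, of uminus] by simp
  finally show ?thesis .
qed

lemma finite_strict_mono_enumeration:
  fixes A :: "'a::linorder set"
  assumes "finite A"
  obtains f where "strict_mono_on {..<card A} f" "A = f ` {..<card A}"
proof
  let ?xs = "sorted_list_of_set A"
  have len: "length ?xs = card A" by simp
  show "strict_mono_on {..<card A} (\<lambda>i. ?xs ! i)"
    using sorted_wrt_nth_less[OF strict_sorted_list_of_set] len
    by (auto simp: strict_mono_on_def)
  show "A = (\<lambda>i. ?xs ! i) ` {..<card A}"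
    using set_sorted_list_of_set[OF assms] len by (auto simp: set_conv_nth)
qed

lemma positive_diffset_enumeration:
  fixes f :: "nat \<Rightarrow> int"
  assumes "strict_mono_on {..<k} f"
  shows "{d \<in> diffset (f ` {..<k}). 0 < d} = (\<lambda>(i, j). f j - f i) ` {(i, j). i < j \<and> j < k}"
proof safe
  fix d assume "d \<in> diffset (f ` {..<k})" "0 < d"
  then obtain i j where ij: "i < k" "j < k" "d = f j - f i"
    by (auto simp: diffset_def)
  with \<open>0 < d\<close> have "i < j"
    using strict_mono_on_less[OF assms, of i j] by simp
  with ij show "d \<in> (\<lambda>(i, j). f j - f i) ` {(i, j). i < j \<and> j < k}"
    by force
next
  fix i j assume "i < j" "j < k"
  then show "f j - f i \<in> diffset (f ` {..<k})"
    unfolding diffset_eq_image by (intro image_eqI[of _ _ "(f j, f i)"]) auto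
  show "0 < f j - f i"
    using strict_mono_onD[OF assms, of i j] \<open>i < j\<close> \<open>j < k\<close> by simp
qed

lemma finite_strict_pairs: "finite {(i :: nat, j). i < j \<and> j < k}"
  by (rule finite_subset[of _ "{..<k} \<times> {..<k}"]) auto

lemma card_strict_pairs: "2 * card {(i :: nat, j). i < j \<and> j < K} = K * (K - 1)"
proof (induction K)
  case 0
  then show ?case by simp
next
  case (Suc K)
  have split: "{(i :: nat, j). i < j \<and> j < Suc K}
      = {(i, j). i < j \<and> j < K} \<union> (\<lambda>i. (i, K)) ` {..<K}"
    by auto
  from finite_strict_pairs[of K]
  have "card {(i :: nat, j). i < j \<and> j < Suc K} = card {(i, j). i < j \<and> j < K} + K"
    unfolding split by (subst card_Un_disjoint) (auto simp: card_image inj_on_def)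
  then show ?case using Suc.IH by (cases K) (auto simp: algebra_simps)
qed

lemma card_times_Suc_card_le_twice_sum:
  fixes S :: "int set"
  assumes "finite S" "\<And>s. s \<in> S \<Longrightarrow> 1 \<le> s"
  shows "int (card S) * (int (card S) + 1) \<le> 2 * \<Sum>S"
  using assms
proof (induction "card S" arbitrary: S)
  case 0
  then show ?case by simp
next
  case (Suc c)
  define M where "M = Max S"
  have "S \<noteq> {}" using Suc.hyps(2) by auto
  then have "M \<in> S" using Suc.prems(1) by (simp add: M_def)
  have "card (S - {M}) = c" using Suc.hyps(2) \<open>M \<in> S\<close> by simp
  then have IH: "int c * (int c + 1) \<le> 2 * \<Sum>(S - {M})"
    using Suc.hyps(1)[of "S - {M}"] Suc.prems by auto
  have "S \<subseteq> {1..M}" using Suc.prems by (auto simp: M_def)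
  then have "card S \<le> nat M" using card_mono[of "{1..M}" S] by simp
  moreover have "\<Sum>S = M + \<Sum>(S - {M})"
    using Suc.prems(1) \<open>M \<in> S\<close> by (simp add: sum.remove)
  ultimately show ?case using IH Suc.hyps(2)[symmetric] by (simp add: algebra_simps)
qed

lemma sum_gap_differences_le:
  fixes f :: "nat \<Rightarrow> int"
  assumes range: "\<And>i. i < k \<Longrightarrow> f i \<in> {1..c}" and "d \<le> k"
  shows "(\<Sum>i<k - d. f (i + d) - f i) \<le> int d * (c - 1)"
proof -
  have "(\<Sum>i<k - d. f (i + d)) = (\<Sum>i = d..<k. f i)"
    using sum.shift_bounds_nat_ivl[of f 0 d "k - d"] \<open>d \<le> k\<close> by (simp add: lessThan_atLeast0)
  also have "\<dots> = (\<Sum>i<k. f i) - (\<Sum>i<d. f i)"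
    using sum.atLeastLessThan_concat[of 0 d k f] \<open>d \<le> k\<close> by (simp add: lessThan_atLeast0)
  also have "(\<Sum>i<k. f i) = (\<Sum>i<k - d. f i) + (\<Sum>i = k - d..<k. f i)"
    using sum.atLeastLessThan_concat[of 0 "k - d" k f] by (simp add: lessThan_atLeast0)
  finally have "(\<Sum>i<k - d. f (i + d) - f i) = (\<Sum>i = k - d..<k. f i) - (\<Sum>i<d. f i)"
    by (simp add: sum_subtractf)
  also have "\<dots> \<le> int d * c - int d * 1"
  proof (rule diff_mono)
    show "(\<Sum>i = k - d..<k. f i) \<le> int d * c"
      using sum_bounded_above[of "{k - d..<k}" f c] range \<open>d \<le> k\<close> by simp
    show "int d * 1 \<le> (\<Sum>i<d. f i)"
      using sum_bounded_below[of "{..<d}" 1 f] range \<open>d \<le> k\<close> by simp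
  qed
  finally show ?thesis by (simp add: algebra_simps)
qed

lemma sum_short_gap_differences_le:
  fixes f :: "nat \<Rightarrow> int"
  assumes range: "\<And>i. i < k \<Longrightarrow> f i \<in> {1..c}" and "m \<le> k"
  shows "2 * (\<Sum>(i, j) \<in> {(i, j). i < j \<and> j < k \<and> j \<le> i + m}. f j - f i)
           \<le> int m * (int m + 1) * (c - 1)"
proof -
  have pairs: "{(i, j). i < j \<and> j < k \<and> j \<le> i + m}
      = (\<lambda>(d, i). (i, i + d)) ` (SIGMA d:{1..m}. {..<k - d})"
  proof (rule set_eqI, rule iffI)
    fix p assume "p \<in> {(i, j). i < j \<and> j < k \<and> j \<le> i + m}"
    then obtain i j where "p = (i, j)" "i < j" "j < k" "j \<le> i + m" by auto
    then show "p \<in> (\<lambda>(d, i). (i, i + d)) ` (SIGMA d:{1..m}. {..<k - d})"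
      by (intro image_eqI[of _ _ "(j - i, i)"]) auto
  qed auto
  have "(\<Sum>(i, j) \<in> {(i, j). i < j \<and> j < k \<and> j \<le> i + m}. f j - f i)
      = (\<Sum>d = 1..m. \<Sum>i<k - d. f (i + d) - f i)" (is "?S = _")
    unfolding pairs
    by (subst sum.reindex) (auto simp: inj_on_def sum.Sigma intro!: sum.cong split: prod.split)
  also have "\<dots> \<le> (\<Sum>d = 1..m. int d * (c - 1))"
    by (intro sum_mono sum_gap_differences_le) (use range \<open>m \<le> k\<close> in auto)
  also have "\<dots> = (\<Sum>d = 1..m. int d) * (c - 1)"
    by (simp add: sum_distrib_right)
  finally have twice: "2 * ?S \<le> 2 * ((\<Sum>d = 1..m. int d) * (c - 1))"
    by linarith
  have gauss: "2 * (\<Sum>d = 1..m. int d) = int m * (int m + 1)"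
    using double_gauss_sum_from_Suc_0[of m] by simp
  show ?thesis
    using twice by (simp only: mult.assoc[symmetric] gauss)
qed

lemma card_short_gap_differences_le:
  fixes f :: "nat \<Rightarrow> int"
  assumes mono: "strict_mono_on {..<k} f" and range: "f ` {..<k} \<subseteq> {1..int n}" and "m \<le> k"
  shows "real (card ((\<lambda>(i, j). f j - f i) ` {(i, j). i < j \<and> j < k \<and> j \<le> i + m}))
           \<le> (real m + 1) * sqrt (real n)"
proof -
  define T where "T = {(i :: nat, j). i < j \<and> j < k \<and> j \<le> i + m}"
  define g where "g = (\<lambda>(i, j). f j - f i)"
  define N where "N = card (g ` T)"
  have finT: "finite T"
    by (rule finite_subset[OF _ finite_strict_pairs]) (auto simp: T_def)
  have pos: "1 \<le> g p" if p: "p \<in> T" for p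
  proof -
    obtain i j where "p = (i, j)" "i < j" "j < k"
      using p by (cases p) (auto simp: T_def)
    then show ?thesis
      using strict_mono_onD[OF mono, of i j] by (simp add: g_def)
  qed
  have "int N * (int N + 1) \<le> 2 * \<Sum>(g ` T)"
    unfolding N_def using finT pos by (intro card_times_Suc_card_le_twice_sum) auto
  also have "2 * \<Sum>(g ` T) \<le> 2 * sum g T"
    using sum_image_le[OF finT, of id g] pos by fastforce
  also have "2 * sum g T \<le> int m * (int m + 1) * (int n - 1)"
    unfolding T_def g_def using range \<open>m \<le> k\<close> by (intro sum_short_gap_differences_le) auto
  finally have "real_of_int (int N * (int N + 1)) \<le> real_of_int (int m * (int m + 1) * (int n - 1))"
    by (simp only: of_int_le_iff)
  then have "real N * (real N + 1) \<le> real m * (real m + 1) * (real n - 1)"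
    by simp
  then have "real N ^ 2 \<le> real m * (real m + 1) * (real n - 1)"
    by (simp add: power2_eq_square algebra_simps)
  also have "\<dots> \<le> (real m + 1) ^ 2 * real n"
    using mult_nonneg_nonneg[of "real m + 1" "real n"] by (simp add: power2_eq_square algebra_simps)
  also have "\<dots> = ((real m + 1) * sqrt (real n)) ^ 2"
    by (simp add: power_mult_distrib)
  finally have "real N ^ 2 \<le> ((real m + 1) * sqrt (real n)) ^ 2" .
  then show ?thesis
    unfolding N_def T_def g_def by (rule power2_le_imp_le) simp
qed

lemma card_long_gap_pairs_le:
  "2 * card {(i :: nat, j). i < j \<and> j < k \<and> i + m < j} \<le> (k - m) * (k - m - 1)"
proof -
  have "card {(i :: nat, j). i < j \<and> j < k \<and> i + m < j}
      \<le> card {(i :: nat, j). i < j \<and> j < k - m}"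
  proof (rule card_inj_on_le[where f = "\<lambda>(i, j). (i, j - m)"])
    show "inj_on (\<lambda>(i, j). (i, j - m)) {(i, j). i < j \<and> j < k \<and> i + m < j}"
      by (auto simp: inj_on_def)
  qed (auto simp: finite_strict_pairs)
  then show ?thesis
    using card_strict_pairs[of "k - m"] by simp
qed

lemma card_diffset_le:
  assumes A: "A \<subseteq> {1..int n}" and "K \<le> card A"
  shows "real (card (diffset A))
           \<le> 2 * (real (card A - K) + 1) * sqrt (real n) + real K * (real K - 1) + 1"
proof -
  define k where "k = card A"
  define m where "m = k - K"
  have "finite A" using A finite_subset by blast
  then obtain f :: "nat \<Rightarrow> int" where mono: "strict_mono_on {..<k} f" and A_eq: "A = f ` {..<k}"
    unfolding k_def by (rule finite_strict_mono_enumeration)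
  define g where "g = (\<lambda>(i :: nat, j :: nat). f j - f i)"
  define short where "short = {(i, j). i < j \<and> j < k \<and> j \<le> i + m}"
  define long where "long = {(i, j). i < j \<and> j < k \<and> i + m < j}"
  have finite_long: "finite long"
    by (rule finite_subset[OF _ finite_strict_pairs]) (auto simp: long_def)
  have "{d \<in> diffset A. 0 < d} = g ` (short \<union> long)"
    unfolding A_eq positive_diffset_enumeration[OF mono] g_def short_def long_def
    by (rule arg_cong[where f = "image _"]) auto
  then have "card {d \<in> diffset A. 0 < d} \<le> card (g ` short) + card long"
    using card_Un_le[of "g ` short" "g ` long"] card_image_le[OF finite_long, of g]
    by (simp add: image_Un)
  then have "card (diffset A) \<le> 2 * (card (g ` short) + card long) + 1"
    using card_diffset_le_positive[OF \<open>finite A\<close>] by simp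
  moreover have "real (card (g ` short)) \<le> (real m + 1) * sqrt (real n)"
  proof -
    have "f ` {..<k} \<subseteq> {1..int n}" using A unfolding A_eq .
    then show ?thesis
      unfolding g_def short_def by (rule card_short_gap_differences_le[OF mono]) (simp add: m_def)
  qed
  moreover have "2 * real (card long) \<le> real K * (real K - 1)"
  proof -
    have "k - m = K" using \<open>K \<le> card A\<close> by (simp add: m_def k_def)
    then have "2 * card long \<le> K * (K - 1)"
      using card_long_gap_pairs_le[of k m] by (simp add: long_def)
    then have "real (2 * card long) \<le> real (K * (K - 1))"
      by (simp only: of_nat_le_iff)
    also have "\<dots> = real K * (real K - 1)"
      by (cases K) (simp_all add: algebra_simps)
    finally show ?thesis by simp
  qed
  ultimately show ?thesis
    unfolding m_def k_def by (simp add: algebra_simps)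
qed

lemma ceiling_split_estimate:
  fixes s :: real and k K :: nat
  assumes "0 \<le> s" "s \<le> real K" "real K \<le> s + 1" "K \<le> k"
  shows "2 * (real (k - K) + 1) * s + real K * (real K - 1) \<le> 2 * real k * s - s\<^sup>2 + 3 * s"
proof -
  have "real K * s \<ge> s * s"
    using assms(1,2) by (simp add: mult_right_mono)
  moreover have "real K * (real K - 1) \<le> (s + 1) * s"
  proof (cases "K = 0")
    case False
    then show ?thesis using assms by (intro mult_mono) auto
  qed (use assms in simp)
  ultimately show ?thesis
    using \<open>K \<le> k\<close> by (simp add: of_nat_diff power2_eq_square algebra_simps)
qed

lemma dkn_attained:
  assumes "k \<le> n"
  obtains A where "A \<subseteq> {1..int n}" "card A = k" "dkn k n = card (diffset A)"
proof -
  let ?C = "{card (diffset A) |A. A \<subseteq> {1..int n} \<and> card A = k}"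
  have "?C = (\<lambda>A. card (diffset A)) ` {A. A \<subseteq> {1..int n} \<and> card A = k}"
    by auto
  then have "finite ?C" by simp
  moreover have "card (diffset {1..int k}) \<in> ?C"
    using assms by force
  ultimately have "dkn k n \<in> ?C"
    unfolding dkn_def by (intro Max_in) auto
  then show ?thesis using that by blast
qed

theorem theorem7:
  shows "\<exists>\<epsilon> :: nat \<Rightarrow> real. \<epsilon> \<in> o(\<lambda>n. real n) \<and>
    (\<exists>N. \<forall>n \<ge> N. \<forall>k :: nat. sqrt (real n) \<le> real k \<and> k \<le> n \<longrightarrow>
       real (dkn k n) \<le> 2 * real k * sqrt (real n) - real n + \<epsilon> n)"
proof (intro exI conjI allI impI)
  show "(\<lambda>n. 3 * sqrt (real n) + 1) \<in> o(\<lambda>n. real n)"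
    by real_asymp
next
  fix n k :: nat
  assume "sqrt (real n) \<le> real k \<and> k \<le> n"
  then have k: "sqrt (real n) \<le> real k" "k \<le> n" by auto
  obtain A where A: "A \<subseteq> {1..int n}" "card A = k" and dkn_eq: "dkn k n = card (diffset A)"
    using dkn_attained[OF \<open>k \<le> n\<close>] .
  define K where "K = nat \<lceil>sqrt (real n)\<rceil>"
  have "real K = of_int \<lceil>sqrt (real n)\<rceil>"
    unfolding K_def by simp
  then have K: "sqrt (real n) \<le> real K" "real K \<le> sqrt (real n) + 1"
    using ceiling_correct[of "sqrt (real n)"] by linarith+
  have "K \<le> k"
    using k(1) unfolding K_def by (simp add: ceiling_le nat_le_iff)
  have "real (dkn k n) \<le> 2 * (real (k - K) + 1) * sqrt (real n) + real K * (real K - 1) + 1"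
    unfolding dkn_eq using card_diffset_le[OF A(1)] A(2) \<open>K \<le> k\<close> by simp
  also have "\<dots> \<le> 2 * real k * sqrt (real n) - real n + (3 * sqrt (real n) + 1)"
    using ceiling_split_estimate[OF _ K \<open>K \<le> k\<close>] by simp
  finally show "real (dkn k n) \<le> 2 * real k * sqrt (real n) - real n + (3 * sqrt (real n) + 1)" .
qed

end
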